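(* Let $K$ be a totally ordered quasi-field of characteristic $1$, $a\in K$, $n\ge1$, let $\varphi:K[X]\to E=K+KX+\dots+KX^{n-1}$ be the $K$-linear map with $\varphi(X^m)=a^qX^r$ for $m=nq+r$, $0\le r<n$, and let $J$ be the ideal of $K[X]$ generated by the $X^{nk}+a^k$, $k\ge1$. If $P,Q\in K[X]$ satisfy $\varphi(P)=\varphi(Q)$, then $P\equiv Q \pmod J$.
   Context: A quasi-field of characteristic $1$ is a commutative semiring $K$ with $1+1=1$ in which every nonzero element is multiplicatively invertible; it is ordered by $u\le v$ iff $u+v=v$, totally ordered meaning the order is total. Congruence modulo an ideal $J$ of $K[X]$: $P\equiv Q\pmod J$ iff $(P+J)\cap(Q+J)\neq\emptyset$ and for all $U\in J$ and $V\in K[X]$: $PU+V\in J\iff QU+V\in J$. *)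

theory Defs
  imports "HOL-Computational_Algebra.Polynomial"
begin

definition quasi_field_char1 :: "'a::comm_semiring_1 itself \<Rightarrow> bool" where
  "quasi_field_char1 _ \<longleftrightarrow>
     (1::'a) + 1 = 1 \<and> (\<forall>x::'a. x \<noteq> 0 \<longrightarrow> (\<exists>y. x * y = 1))"

definition sr_le :: "'a::comm_semiring_1 \<Rightarrow> 'a \<Rightarrow> bool" where
  "sr_le u v \<longleftrightarrow> u + v = v"

definition totally_ordered_sr :: "'a::comm_semiring_1 itself \<Rightarrow> bool" where
  "totally_ordered_sr _ \<longleftrightarrow> (\<forall>u v::'a. sr_le u v \<or> sr_le v u)"

definition gen_ideal_sr :: "'a::comm_semiring_1 set \<Rightarrow> 'a set" where
  "gen_ideal_sr G = {P. \<exists>(N::nat) F g. (\<forall>i<N. g i \<in> G) \<and> P = (\<Sum>i<N. F i * g i)}"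

definition cong_ideal :: "'a::comm_semiring_1 set \<Rightarrow> 'a \<Rightarrow> 'a \<Rightarrow> bool" where
  "cong_ideal J P Q \<longleftrightarrow>
     (\<exists>U\<in>J. \<exists>V\<in>J. P + U = Q + V) \<and>
     (\<forall>U\<in>J. \<forall>V. P * U + V \<in> J \<longleftrightarrow> Q * U + V \<in> J)"

definition phi :: "nat \<Rightarrow> 'a::comm_semiring_1 \<Rightarrow> 'a poly \<Rightarrow> 'a poly" where
  "phi n a P = (\<Sum>m\<le>degree P. monom (coeff P m * a ^ (m div n)) (m mod n))"

definition Jideal :: "nat \<Rightarrow> 'a::comm_semiring_1 \<Rightarrow> 'a poly set" where
  "Jideal n a = gen_ideal_sr {monom 1 (n * k) + [:a ^ k:] | k. k \<ge> 1}"

end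

theory Submission
  imports Defs
begin

(* Write m = n q + r with 0 \<le> r < n and give the monomial c X^m the weight c a^q in column r.
   In characteristic 1 a sum is a maximum, so phi(W) records, for each column r, the largest
   weight of W in that column. Call W balanced if in every column this maximum is attained
   at two different positions.
   1. Column maxima of products only depend on phi of the first factor:
      phi(P U) = phi(phi(P) U).
   2. For a zero or invertible, J is exactly the set of balanced polynomials: generator
      multiples F (X^(n k) + a^k) are balanced and balancedness is closed under sums;
      conversely a balanced W is a sum of elements c X^m + e X^p of J in which each
      monomial is paired with a maximal position of its column.
   3. Balancedness of A + V only depends on the column maxima of a balanced A; with 1 and 2
      this gives P U + V \<in> J \<Longrightarrow> Q U + V \<in> J whenever phi(P) = phi(Q) and U \<in> J.
   4. For every W, the reduction term T(W) \<in> J satisfies W + T(W) = phi(W) + T(W), so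
      U = T(P) + T(Q) gives P + U = Q + U. *)

notation sr_le (infix "\<preceq>" 50)

lemma same_residue_offset:
  fixes p m n :: nat
  assumes "p mod n = m mod n" and "m div n \<le> p div n"
  shows "p = m + n * (p div n - m div n)"
proof -
  have "p = n * (p div n) + m mod n" using assms(1) by (metis mult_div_mod_eq)
  also have "n * (p div n) = n * (m div n) + n * (p div n - m div n)"
    using assms(2) by (simp add: diff_mult_distrib2)
  finally show ?thesis by (metis add.commute add.left_commute mult_div_mod_eq)
qed

lemma smult_sum_right: "smult c (\<Sum>i\<in>I. f i) = (\<Sum>i\<in>I. smult c (f i))"
  by (induction I rule: infinite_finite_induct) (simp_all add: smult_add_right)

lemma gen_ideal_sr_0: "0 \<in> gen_ideal_sr G"
  unfolding gen_ideal_sr_def by (intro CollectI exI[of _ "0::nat"]) simp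

lemma gen_ideal_sr_add_multiple:
  assumes "x \<in> gen_ideal_sr G" and "g \<in> G"
  shows "x + c * g \<in> gen_ideal_sr G"
proof -
  obtain N :: nat and F h where h: "\<forall>i<N. h i \<in> G" and x: "x = (\<Sum>i<N. F i * h i)"
    using assms(1) unfolding gen_ideal_sr_def by blast
  have "x + c * g = (\<Sum>i<Suc N. (F(N := c)) i * (h(N := g)) i)"
    by (simp add: x)
  moreover have "\<forall>i<Suc N. (h(N := g)) i \<in> G"
    using h assms(2) by (simp add: less_Suc_eq)
  ultimately show ?thesis
    unfolding gen_ideal_sr_def by blast
qed

lemma gen_ideal_sr_induct [consumes 1, case_names zero add_multiple]:
  assumes "x \<in> gen_ideal_sr G"
    and "P 0"
    and "\<And>y c g. P y \<Longrightarrow> g \<in> G \<Longrightarrow> P (y + c * g)"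
  shows "P x"
proof -
  obtain N :: nat and F h where h: "\<forall>i<N. h i \<in> G" and x: "x = (\<Sum>i<N. F i * h i)"
    using assms(1) unfolding gen_ideal_sr_def by blast
  have "P (\<Sum>i<M. F i * h i)" if "M \<le> N" for M
    using that by (induction M) (simp_all add: assms(2,3) h)
  then show ?thesis using x by simp
qed

lemma gen_ideal_sr_add:
  assumes "x \<in> gen_ideal_sr G" and "y \<in> gen_ideal_sr G"
  shows "x + y \<in> gen_ideal_sr G"
  using assms(2)
proof (induction rule: gen_ideal_sr_induct)
  case zero then show ?case using assms(1) by simp
next
  case (add_multiple y c g)
  then show ?case using gen_ideal_sr_add_multiple by (metis add.assoc)
qed

lemma gen_ideal_sr_mult:
  assumes "x \<in> gen_ideal_sr G"
  shows "d * x \<in> gen_ideal_sr G"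
  using assms
proof (induction rule: gen_ideal_sr_induct)
  case zero then show ?case by (simp add: gen_ideal_sr_0)
next
  case (add_multiple y c g)
  then show ?case using gen_ideal_sr_add_multiple[of "d * y" G g "d * c"]
    by (simp add: distrib_left mult.assoc)
qed

lemma gen_ideal_sr_multiple: "g \<in> G \<Longrightarrow> c * g \<in> gen_ideal_sr G"
  using gen_ideal_sr_add_multiple[OF gen_ideal_sr_0] by simp

lemma gen_ideal_sr_sum:
  "finite I \<Longrightarrow> (\<And>i. i \<in> I \<Longrightarrow> f i \<in> gen_ideal_sr G) \<Longrightarrow> sum f I \<in> gen_ideal_sr G"
  by (induction I rule: finite_induct) (simp_all add: gen_ideal_sr_0 gen_ideal_sr_add)

text \<open>A commutative semiring with 1 + 1 = 1 whose order u \<preceq> v (u + v = v) is total.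
  Addition is then idempotent and a finite sum is the maximum of its terms.\<close>
locale char1_order =
  assumes one_add_one: "(1::'a::comm_semiring_1) + 1 = 1"
    and total: "\<And>u v::'a. u \<preceq> v \<or> v \<preceq> u"
begin

lemma add_idem [simp]: "(x::'a) + x = x"
  by (metis distrib_left mult.right_neutral one_add_one)

lemma le_refl: "(x::'a) \<preceq> x"
  by (simp add: sr_le_def)

lemma le_trans: "(x::'a) \<preceq> y \<Longrightarrow> y \<preceq> z \<Longrightarrow> x \<preceq> z"
  unfolding sr_le_def by (metis add.assoc)

lemma zero_le: "0 \<preceq> (x::'a)"
  by (simp add: sr_le_def)

lemma le_zero_iff: "(x::'a) \<preceq> 0 \<longleftrightarrow> x = 0"
  by (simp add: sr_le_def)

lemma le_add_left: "(x::'a) \<preceq> x + y"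
  unfolding sr_le_def by (metis add.assoc add_idem)

lemma add_le: "(x::'a) \<preceq> z \<Longrightarrow> y \<preceq> z \<Longrightarrow> x + y \<preceq> z"
  unfolding sr_le_def by (metis add.assoc)

lemma add_eq_either: "(x::'a) + y = x \<or> x + y = y"
  using total[of x y] unfolding sr_le_def by (metis add.commute)

lemma add_eq_right: "(x::'a) \<preceq> y \<Longrightarrow> x + y = y"
  by (simp add: sr_le_def)

lemma add_eq_left: "(y::'a) \<preceq> x \<Longrightarrow> x + y = x"
  by (simp add: sr_le_def add.commute)

lemma mult_right_mono: "(x::'a) \<preceq> y \<Longrightarrow> x * z \<preceq> y * z"
  unfolding sr_le_def by (metis distrib_right)

lemma sum_le: "finite A \<Longrightarrow> (\<And>i. i \<in> A \<Longrightarrow> f i \<preceq> (x::'a)) \<Longrightarrow> sum f A \<preceq> x"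
  by (induction A rule: finite_induct) (simp_all add: zero_le add_le)

lemma member_le_sum: "finite A \<Longrightarrow> i \<in> A \<Longrightarrow> f i \<preceq> (sum f A :: 'a)"
  by (metis le_add_left sum.remove)

lemma le_cancel_unit_power:
  assumes "(a::'a) * b = 1" and "x * a ^ j \<preceq> y * a ^ j"
  shows "x \<preceq> y"
proof -
  have "a ^ j * b ^ j = 1" by (metis assms(1) power_mult_distrib power_one)
  then show ?thesis
    using mult_right_mono[OF assms(2), of "b ^ j"] by (simp add: mult.assoc)
qed

text \<open>A finite sum is the maximum of its terms and so equals one of them.\<close>
lemma sum_attained: "finite A \<Longrightarrow> A \<noteq> {} \<Longrightarrow> \<exists>i\<in>A. sum f A = (f i :: 'a)"
proof (induction A rule: finite_ne_induct)
  case (singleton x) then show ?case by simp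
next
  case (insert x F)
  then obtain i where "i \<in> F" "sum f F = f i" by auto
  then show ?case
    using insert total[of "f x" "f i"] by (auto simp: add_eq_right add_eq_left)
qed

lemma poly_add_idem [simp]: "(p::'a poly) + p = p"
  by (simp add: poly_eq_iff)

text \<open>Idempotence lifts to polynomials; it is what lets an element of J absorb terms.\<close>
lemma poly_absorb: "(p::'a poly) + (p + q) = p + q" "(q::'a poly) + (p + q) = p + q"
  by (simp only: add.assoc[symmetric] poly_add_idem)
     (simp only: add.left_commute[of q p q] poly_add_idem)

end

text \<open>The monomial c X^m, m = n q + r, has weight c a^q in column r;
  phi collects the weights column by column, and in characteristic 1 the coefficient of
  X^r in phi W is the largest weight of W in column r.\<close>
locale residue_weights = char1_order +
  fixes n :: nat and a :: "'a::comm_semiring_1"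
  assumes n_pos: "0 < n"
begin

definition weight :: "'a poly \<Rightarrow> nat \<Rightarrow> 'a" where
  "weight W m = coeff W m * a ^ (m div n)"

definition colmax :: "nat \<Rightarrow> 'a poly \<Rightarrow> 'a" where
  "colmax r W = coeff (phi n a W) r"

lemma phi_degree_bound:
  "degree W \<le> D \<Longrightarrow> phi n a W = (\<Sum>m\<le>D. monom (coeff W m * a ^ (m div n)) (m mod n))"
  unfolding phi_def by (rule sum.mono_neutral_left) (auto simp: coeff_eq_0)

lemma colmax_degree_bound:
  "degree W \<le> D \<Longrightarrow> colmax r W = (\<Sum>m\<le>D. if m mod n = r then weight W m else 0)"
  unfolding colmax_def weight_def by (simp add: phi_degree_bound coeff_sum)

text \<open>Every weight is dominated by its column maximum, and the maximum is attained (if all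
  weights of the column vanish, at a position beyond the degree).\<close>
lemma weight_le_colmax: "m mod n = r \<Longrightarrow> weight W m \<preceq> colmax r W"
  using member_le_sum[of "{..max m (degree W)}" m "\<lambda>j. if j mod n = r then weight W j else 0"]
  by (simp add: colmax_degree_bound[of W "max m (degree W)"])

lemma colmax_attained:
  assumes "r < n"
  shows "\<exists>m. m mod n = r \<and> weight W m = colmax r W"
proof -
  let ?D = "degree W"
  let ?g = "\<lambda>m. if m mod n = r then weight W m else 0"
  obtain m0 where m0: "m0 \<le> ?D" "colmax r W = ?g m0"
    using sum_attained[of "{..?D}" ?g] colmax_degree_bound[of W ?D] by auto
  show ?thesis
  proof (cases "m0 mod n = r")
    case True then show ?thesis using m0 by auto
  next
    case False
    let ?m = "r + n * Suc ?D"
    have "Suc ?D \<le> n * Suc ?D" using n_pos mult_le_mono1[of 1 n "Suc ?D"] by simp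
    then have "coeff W ?m = 0" by (simp add: coeff_eq_0)
    moreover have "?m mod n = r" using assms by (simp only: mod_mult_self2 mod_less)
    ultimately show ?thesis using False m0 by (auto simp: weight_def)
  qed
qed

lemma weight_add: "weight (A + B) m = weight A m + weight B m"
  by (simp add: weight_def distrib_right)

lemma weight_smult: "weight (smult c A) m = c * weight A m"
  by (simp add: weight_def mult.assoc)

lemma weight_shift: "weight (monom 1 (n * k) * W) (m + n * k) = a ^ k * weight W m"
proof -
  have "(m + n * k) div n = m div n + k" using n_pos by simp
  moreover have "coeff (monom 1 (n * k) * W) (m + n * k) = coeff W m"
    by (simp add: coeff_monom_mult)
  ultimately show ?thesis by (simp add: weight_def power_add mult_ac)
qed

lemma phi_monom: "phi n a (monom c m) = monom (c * a ^ (m div n)) (m mod n)"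
  by (simp add: phi_degree_bound[OF degree_monom_le] if_distrib[of "\<lambda>x. monom (x * _) _"]
        cong: if_cong)

lemma phi_0 [simp]: "phi n a 0 = 0"
  by (simp add: phi_def)

lemma phi_add: "phi n a (A + B) = phi n a A + phi n a B"
proof -
  let ?D = "max (degree A) (degree B)"
  have "degree (A + B) \<le> ?D" by (rule degree_add_le) auto
  then show ?thesis
    by (simp add: phi_degree_bound[of _ ?D] distrib_right add_monom[symmetric] sum.distrib[symmetric])
qed

lemma phi_smult: "phi n a (smult c W) = smult c (phi n a W)"
  using degree_smult_le[of c W]
  by (simp add: phi_degree_bound[of _ "degree W"] smult_sum_right smult_monom mult.assoc)

lemma phi_sum: "finite I \<Longrightarrow> phi n a (\<Sum>i\<in>I. f i) = (\<Sum>i\<in>I. phi n a (f i))"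
  by (induction I rule: finite_induct) (simp_all add: phi_add)

lemma phi_shift: "phi n a (monom 1 (n * q) * W) = smult (a ^ q) (phi n a W)"
proof -
  have monom_shift: "phi n a (monom c (m + n * q)) = smult (a ^ q) (phi n a (monom c m))" for c m
  proof -
    have "(m + n * q) div n = m div n + q" using n_pos by simp
    then show ?thesis by (simp add: phi_monom smult_monom power_add mult_ac)
  qed
  have "monom 1 (n * q) * W = (\<Sum>m\<le>degree W. monom (coeff W m) (m + n * q))"
    by (subst (1) poly_as_sum_of_monoms[symmetric, of W])
       (simp add: sum_distrib_left mult_monom add.commute)
  then have "phi n a (monom 1 (n * q) * W)
      = (\<Sum>m\<le>degree W. smult (a ^ q) (phi n a (monom (coeff W m) m)))"
    by (simp add: phi_sum monom_shift)
  also have "\<dots> = smult (a ^ q) (phi n a (\<Sum>m\<le>degree W. monom (coeff W m) m))"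
    by (simp add: phi_sum smult_sum_right)
  finally show ?thesis by (simp add: poly_as_sum_of_monoms)
qed

lemma phi_monom_mult:
  "phi n a (monom c m * U) = phi n a (monom (c * a ^ (m div n)) (m mod n) * U)"
proof -
  have "monom c m * U = monom 1 (n * (m div n)) * (monom c (m mod n) * U)"
    by (simp add: mult_monom mult.assoc[symmetric] add.commute)
  then have "phi n a (monom c m * U) = phi n a (smult (a ^ (m div n)) (monom c (m mod n) * U))"
    by (simp only: phi_shift phi_smult)
  also have "smult (a ^ (m div n)) (monom c (m mod n) * U) = monom (c * a ^ (m div n)) (m mod n) * U"
    by (simp only: smult_monom_mult mult.commute[of c])
  finally show ?thesis .
qed

lemma phi_mult_phi: "phi n a (P * U) = phi n a (phi n a P * U)"
proof -
  have "phi n a (P * U) = (\<Sum>m\<le>degree P. phi n a (monom (coeff P m) m * U))"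
    by (subst (1) poly_as_sum_of_monoms[symmetric]) (simp add: sum_distrib_right phi_sum)
  also have "\<dots> = (\<Sum>m\<le>degree P. phi n a (monom (coeff P m * a ^ (m div n)) (m mod n) * U))"
    by (rule sum.cong[OF refl phi_monom_mult])
  also have "\<dots> = phi n a (\<Sum>m\<le>degree P. monom (coeff P m * a ^ (m div n)) (m mod n) * U)"
    by (simp only: phi_sum finite_atMost)
  finally show ?thesis
    by (simp only: phi_def[of n a P] sum_distrib_right)
qed

lemma colmax_0 [simp]: "colmax r 0 = 0"
  by (simp add: colmax_def)

lemma colmax_add: "colmax r (A + B) = colmax r A + colmax r B"
  by (simp add: colmax_def phi_add)

lemma colmax_smult: "colmax r (smult c W) = c * colmax r W"
  by (simp add: colmax_def phi_smult)

lemma colmax_shift: "colmax r (monom 1 (n * k) * W) = a ^ k * colmax r W"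
  by (simp add: colmax_def phi_shift)

text \<open>W is balanced if in every column the maximal weight is attained at two different
  positions (the tropical condition "the maximum is attained twice").\<close>
definition balanced_at :: "nat \<Rightarrow> 'a poly \<Rightarrow> bool" where
  "balanced_at r W \<longleftrightarrow> (\<exists>m1 m2. m1 \<noteq> m2 \<and> m1 mod n = r \<and> m2 mod n = r \<and>
      weight W m1 = colmax r W \<and> weight W m2 = colmax r W)"

definition balanced :: "'a poly \<Rightarrow> bool" where
  "balanced W \<longleftrightarrow> (\<forall>r<n. balanced_at r W)"

lemma weight_add_at_max:
  assumes "m mod n = r" and "weight A m = colmax r A" and "colmax r B \<preceq> colmax r A"
  shows "weight (A + B) m = colmax r (A + B)"
proof -
  have "weight B m \<preceq> colmax r A"
    using le_trans[OF weight_le_colmax[OF assms(1)] assms(3)] .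
  then show ?thesis
    using assms by (simp add: weight_add colmax_add add_eq_left)
qed

lemma max_position_of_dominant:
  assumes "m mod n = r" and "weight (A + V) m = colmax r (A + V)"
    and "\<not> colmax r V \<preceq> colmax r A"
  shows "weight V m = colmax r V"
proof -
  have "colmax r A \<preceq> colmax r V" using assms(3) total by blast
  then have sum: "weight A m + weight V m = colmax r V"
    using assms(2) by (simp add: weight_add colmax_add add_eq_right)
  show ?thesis
  proof (cases "weight A m + weight V m = weight A m")
    case True
    then have "colmax r V \<preceq> colmax r A"
      using sum weight_le_colmax[OF assms(1), of A] by simp
    then show ?thesis using assms(3) by simp
  next
    case False
    then show ?thesis using sum add_eq_either by metis
  qed
qed

lemma balanced_at_add_dominated:
  assumes "balanced_at r B" and "colmax r V \<preceq> colmax r B"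
  shows "balanced_at r (B + V)"
  using assms weight_add_at_max[of _ r B V] unfolding balanced_at_def by metis

lemma balanced_0: "balanced 0"
  unfolding balanced_def balanced_at_def
proof (intro allI impI)
  fix r assume "r < n"
  then show "\<exists>m1 m2. m1 \<noteq> m2 \<and> m1 mod n = r \<and> m2 mod n = r \<and>
      weight 0 m1 = colmax r 0 \<and> weight 0 m2 = colmax r 0"
    using n_pos by (intro exI[of _ r] exI[of _ "r + n"]) (simp add: weight_def)
qed

text \<open>Balanced polynomials are closed under addition (use the dominant summand).\<close>
lemma balanced_add:
  assumes "balanced A" and "balanced B"
  shows "balanced (A + B)"
  unfolding balanced_def
proof (intro allI impI)
  fix r assume "r < n"
  then have "balanced_at r A" "balanced_at r B"
    using assms unfolding balanced_def by auto
  then show "balanced_at r (A + B)"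
    using total[of "colmax r A" "colmax r B"] balanced_at_add_dominated add.commute by metis
qed

abbreviation generator :: "nat \<Rightarrow> 'a poly" where
  "generator k \<equiv> monom 1 (n * k) + [:a ^ k:]"

lemma generator_multiple_in_ideal: "1 \<le> k \<Longrightarrow> F * generator k \<in> Jideal n a"
  unfolding Jideal_def by (rule gen_ideal_sr_multiple) blast

text \<open>In F (X^(n k) + a^k) each column maximum of F appears twice: once from the term
  a^k F and once, n k places higher, from the term X^(n k) F.\<close>
lemma balanced_generator_multiple:
  assumes "1 \<le> k"
  shows "balanced (F * generator k)"
  unfolding balanced_def
proof (intro allI impI)
  fix r assume "r < n"
  then obtain m where m: "m mod n = r" "weight F m = colmax r F"
    using colmax_attained by blast
  let ?G = "monom 1 (n * k) * F" and ?S = "smult (a ^ k) F"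
  have colmax_eq: "colmax r ?G = colmax r ?S"
    by (simp add: colmax_shift colmax_smult)
  have "weight (?S + ?G) m = colmax r (?S + ?G)"
    using m colmax_eq by (intro weight_add_at_max) (simp_all add: weight_smult colmax_smult le_refl)
  moreover have "weight (?G + ?S) (m + n * k) = colmax r (?G + ?S)"
    using m colmax_eq by (intro weight_add_at_max) (simp_all add: weight_shift colmax_shift le_refl)
  moreover have "m \<noteq> m + n * k" using n_pos assms by simp
  moreover have "F * generator k = ?G + ?S" by (simp add: algebra_simps)
  ultimately show "balanced_at r (F * generator k)"
    unfolding balanced_at_def using m(1) by (metis add.commute mod_mult_self2)
qed

lemma ideal_balanced:
  assumes "W \<in> Jideal n a"
  shows "balanced W"
  using assms unfolding Jideal_def
proof (induction rule: gen_ideal_sr_induct)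
  case zero then show ?case by (rule balanced_0)
next
  case (add_multiple y c g)
  then obtain k where "1 \<le> k" "g = generator k" by blast
  then show ?case
    using add_multiple.IH balanced_add balanced_generator_multiple by simp
qed

lemma balanced_transfer:
  assumes "balanced A" and "balanced B" and "\<And>r. r < n \<Longrightarrow> colmax r A = colmax r B"
    and "balanced (A + V)"
  shows "balanced (B + V)"
  unfolding balanced_def
proof (intro allI impI)
  fix r assume r: "r < n"
  show "balanced_at r (B + V)"
  proof (cases "colmax r V \<preceq> colmax r B")
    case True
    then show ?thesis
      using assms(2) r balanced_at_add_dominated unfolding balanced_def by blast
  next
    case False
    then have dominant: "colmax r B \<preceq> colmax r V" using total by blast
    have "weight (V + B) m = colmax r (V + B)"
      if "m mod n = r" and "weight (A + V) m = colmax r (A + V)" for m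
      using that False assms(3)[OF r] max_position_of_dominant[of m r A V]
      by (intro weight_add_at_max[OF _ _ dominant]) simp_all
    moreover have "balanced_at r (A + V)" using assms(4) r unfolding balanced_def by blast
    ultimately show ?thesis unfolding balanced_at_def by (metis add.commute)
  qed
qed

lemma balanced_other_max:
  assumes "balanced W"
  shows "\<exists>q. q \<noteq> m \<and> q mod n = m mod n \<and> weight W q = colmax (m mod n) W"
proof -
  have "balanced_at (m mod n) W" using assms n_pos unfolding balanced_def by simp
  then show ?thesis unfolding balanced_at_def by metis
qed

text \<open>For a = 0 balancedness forces all coefficients of degree < n to vanish, so
  W is a multiple of the generator X^n.\<close>
lemma balanced_ideal_zero:
  assumes "a = 0" and "balanced W"
  shows "W \<in> Jideal n a"
proof -
  have low_coeff: "coeff W r = 0" if r: "r < n" for r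
  proof -
    obtain q where q: "q \<noteq> r" "q mod n = r" "weight W q = colmax r W"
      using balanced_other_max[OF assms(2), of r] r by auto
    then have "n \<le> q" using r by (metis mod_less not_le)
    then have "0 < q div n" using n_pos by (simp add: div_greater_zero_iff)
    then have "weight W q = 0"
      unfolding weight_def using assms(1) by (simp add: power_0_left)
    then have "colmax r W = 0" using q(3) by simp
    then show ?thesis
      using weight_le_colmax[of r r W] r by (simp add: weight_def le_zero_iff)
  qed
  have "monom (coeff W m) m \<in> Jideal n a" for m
  proof (cases "m < n")
    case True then show ?thesis
      using low_coeff generator_multiple_in_ideal[of 1 0] by simp
  next
    case False
    then have "monom (coeff W m) m = monom (coeff W m) (m - n) * generator 1"
      using assms(1) by (simp add: mult_monom)
    then show ?thesis using generator_multiple_in_ideal[of 1] by simp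
  qed
  then have "(\<Sum>m\<le>degree W. monom (coeff W m) m) \<in> Jideal n a"
    unfolding Jideal_def by (intro gen_ideal_sr_sum) auto
  then show ?thesis by (simp add: poly_as_sum_of_monoms)
qed

lemma monom_pair_in_ideal:
  assumes ab: "a * b = 1" and res: "p mod n = m mod n" and ne: "p \<noteq> m"
    and le: "c * a ^ (m div n) \<preceq> d * a ^ (p div n)"
  shows "\<exists>e. e \<preceq> d \<and> monom c m + monom e p \<in> Jideal n a"
proof (cases "p div n < m div n")
  case True
  define k where "k = m div n - p div n"
  have k: "1 \<le> k" "m = p + n * k"
    using True same_residue_offset[of m n p] res unfolding k_def by auto
  have "monom c p * generator k = monom c m + monom (c * a ^ k) p"
    by (simp add: k(2) distrib_left mult_monom smult_monom add.commute mult.commute)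
  moreover have "(c * a ^ k) * a ^ (p div n) = c * a ^ (m div n)"
    using True by (simp add: k_def mult.assoc flip: power_add)
  then have "c * a ^ k \<preceq> d"
    using le le_cancel_unit_power[OF ab] by metis
  ultimately show ?thesis
    using generator_multiple_in_ideal[OF k(1)] by metis
next
  case False
  then have "m div n < p div n"
    using ne res by (metis div_mult_mod_eq linorder_neqE_nat)
  define k where "k = p div n - m div n"
  have k: "1 \<le> k" "p = m + n * k"
    using \<open>m div n < p div n\<close> same_residue_offset[of p n m] res unfolding k_def by auto
  have ak: "a ^ k * b ^ k = 1" by (metis ab power_mult_distrib power_one)
  have "a ^ k * (c * b ^ k) = c" using ak by (metis mult.left_commute mult.right_neutral)
  then have "monom (c * b ^ k) m * generator k = monom c m + monom (c * b ^ k) p"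
    by (simp add: k(2) distrib_left mult_monom smult_monom add.commute mult.commute)
  moreover have "a ^ (p div n) = a ^ k * a ^ (m div n)"
    using \<open>m div n < p div n\<close> by (simp add: k_def flip: power_add)
  then have "(c * b ^ k) * a ^ (p div n) = c * (a ^ k * b ^ k) * a ^ (m div n)"
    by (simp add: mult_ac)
  then have "(c * b ^ k) * a ^ (p div n) = c * a ^ (m div n)"
    by (simp add: ak)
  then have "c * b ^ k \<preceq> d"
    using le le_cancel_unit_power[OF ab] by metis
  ultimately show ?thesis
    using generator_multiple_in_ideal[OF k(1)] by metis
qed

text \<open>With a invertible, a balanced polynomial lies in J: pair every monomial with a
  maximal monomial of its column and add the resulting elements of J; the added
  monomials are absorbed by W since their coefficients are dominated.\<close>
lemma balanced_ideal_unit: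
  assumes ab: "a * b = 1" and bal: "balanced W"
  shows "W \<in> Jideal n a"
proof -
  have "\<exists>p e. e \<preceq> coeff W p \<and> monom (coeff W m) m + monom e p \<in> Jideal n a" for m
  proof -
    obtain p where p: "p \<noteq> m" "p mod n = m mod n" "weight W p = colmax (m mod n) W"
      using balanced_other_max[OF bal] by blast
    then have "weight W m \<preceq> weight W p" using weight_le_colmax by simp
    then show ?thesis
      using monom_pair_in_ideal[OF ab p(2,1)] unfolding weight_def by blast
  qed
  then obtain p e where dominated: "\<And>m. e m \<preceq> coeff W (p m)"
    and pair: "\<And>m. monom (coeff W m) m + monom (e m) (p m) \<in> Jideal n a"
    by metis
  let ?E = "\<Sum>m\<le>degree W. monom (e m) (p m)"
  have "(\<Sum>m\<le>degree W. monom (coeff W m) m + monom (e m) (p m)) \<in> Jideal n a"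
    using pair unfolding Jideal_def by (intro gen_ideal_sr_sum) auto
  then have in_ideal: "W + ?E \<in> Jideal n a"
    by (simp add: sum.distrib poly_as_sum_of_monoms)
  have "W + ?E = W"
  proof (rule poly_eqI)
    fix j
    have "(\<Sum>m\<le>degree W. if p m = j then e m else 0) \<preceq> coeff W j"
      using dominated by (intro sum_le) (auto simp: zero_le)
    then show "coeff (W + ?E) j = coeff W j"
      by (simp add: coeff_sum add_eq_left)
  qed
  then show ?thesis using in_ideal by simp
qed

lemma ideal_iff_balanced:
  assumes "a = 0 \<or> (\<exists>b. a * b = 1)"
  shows "W \<in> Jideal n a \<longleftrightarrow> balanced W"
  using assms ideal_balanced balanced_ideal_zero balanced_ideal_unit by blast

definition reduction_term :: "'a poly \<Rightarrow> 'a poly" where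
  "reduction_term W = (\<Sum>m\<le>degree W.
     if m < n then 0 else monom (coeff W m) (m mod n) * generator (m div n))"

lemma reduction_term_in_ideal: "reduction_term W \<in> Jideal n a"
  unfolding reduction_term_def Jideal_def
proof (intro gen_ideal_sr_sum ballI)
  fix m
  have "n \<le> m \<Longrightarrow> 1 \<le> m div n" using n_pos by (simp add: Suc_le_eq div_greater_zero_iff)
  then show "(if m < n then 0 else monom (coeff W m) (m mod n) * generator (m div n))
      \<in> gen_ideal_sr {generator k |k. 1 \<le> k}"
    using generator_multiple_in_ideal gen_ideal_sr_0 unfolding Jideal_def by auto
qed simp

text \<open>Adding the reduction term turns W into its image under phi: each term X^m + a^q X^r
  of the reduction term absorbs both the monomial X^m of W and its image a^q X^r.\<close>
lemma add_reduction_term: "W + reduction_term W = phi n a W + reduction_term W"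
proof -
  let ?t = "\<lambda>m. if m < n then 0 else monom (coeff W m) (m mod n) * generator (m div n)"
  have "monom (coeff W m) m + ?t m = monom (coeff W m * a ^ (m div n)) (m mod n) + ?t m" for m
  proof (cases "m < n")
    case False
    have "?t m = monom (coeff W m) m + monom (coeff W m * a ^ (m div n)) (m mod n)"
      using False by (simp add: distrib_left mult_monom smult_monom add.commute mult.commute)
    then show ?thesis by (simp only: poly_absorb)
  qed simp
  then have "(\<Sum>m\<le>degree W. monom (coeff W m) m + ?t m)
      = (\<Sum>m\<le>degree W. monom (coeff W m * a ^ (m div n)) (m mod n) + ?t m)"
    by simp
  then show ?thesis
    by (simp add: sum.distrib poly_as_sum_of_monoms reduction_term_def phi_def)
qed

text \<open>The multiplicative half of the congruence: P U + V and Q U + V are simultaneously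
  balanced, because column maxima of products only depend on phi of the first factor.\<close>
lemma transfer_multiple:
  assumes unit: "a = 0 \<or> (\<exists>b. a * b = 1)"
    and phi_eq: "phi n a P = phi n a Q"
    and U: "U \<in> Jideal n a" and PUV: "P * U + V \<in> Jideal n a"
  shows "Q * U + V \<in> Jideal n a"
proof -
  have "colmax r (P * U) = colmax r (Q * U)" for r
    using phi_mult_phi[of P U] phi_mult_phi[of Q U] phi_eq by (simp add: colmax_def)
  moreover have "balanced (P * U)" "balanced (Q * U)"
    using U ideal_balanced unfolding Jideal_def by (auto intro: gen_ideal_sr_mult)
  ultimately have "balanced (Q * U + V)"
    using balanced_transfer PUV ideal_balanced by blast
  then show ?thesis using ideal_iff_balanced[OF unit] by blast
qed

text \<open>The congruence, for a zero or invertible: the sum of the reduction terms of P and Q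
  equalises P and Q, and the multiplicative condition follows from the transfer lemma.\<close>
lemma cong_if_phi_eq:
  assumes unit: "a = 0 \<or> (\<exists>b. a * b = 1)" and phi_eq: "phi n a P = phi n a Q"
  shows "cong_ideal (Jideal n a) P Q"
proof -
  let ?U = "reduction_term P + reduction_term Q"
  have U: "?U \<in> Jideal n a"
    unfolding Jideal_def by (intro gen_ideal_sr_add reduction_term_in_ideal[unfolded Jideal_def])
  have "P + ?U = phi n a P + ?U"
    using add_reduction_term[of P] by (metis add.assoc)
  moreover have "Q + ?U = phi n a Q + ?U"
    using add_reduction_term[of Q] by (metis add.assoc add.left_commute)
  ultimately have "P + ?U = Q + ?U"
    using phi_eq by simp
  then show ?thesis
    unfolding cong_ideal_def using U
    using transfer_multiple[OF unit phi_eq] transfer_multiple[OF unit phi_eq[symmetric]] by blast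
qed

end

theorem lemma3p5:
  fixes a :: "'a::comm_semiring_1" and n :: nat and P Q :: "'a poly"
  assumes "quasi_field_char1 TYPE('a)"
    and "totally_ordered_sr TYPE('a)"
    and "n \<ge> 1"
    and "phi n a P = phi n a Q"
  shows "cong_ideal (Jideal n a) P Q"
proof -
  interpret residue_weights n a
    using assms(1-3) unfolding quasi_field_char1_def totally_ordered_sr_def
    by unfold_locales auto
  have "a = 0 \<or> (\<exists>b. a * b = 1)"
    using assms(1) unfolding quasi_field_char1_def by blast
  then show ?thesis using cong_if_phi_eq assms(4) by blast
qed

end
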